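(* Let $0<\nu<1$, $0\le\mu<1$ and $n\in\{0,1,2,\dots\}$. Then for every $t>0$, $$\frac{d^n f_{\nu,\mu}(t)}{dt^n}=f_{\nu,\mu-n}(t)=\frac{(-1)^n}{\pi}\int_0^\infty u^{\,n-\mu}\,\exp\!\big(-ut-u^{\nu}\cos(\pi\nu)\big)\,\sin\!\big(u^{\nu}\sin(\pi\nu)+\pi\mu\big)\,du .$$
   Context: For $0<\nu<1$ and real $\rho$, $f_{\nu,\rho}$ denotes the inverse Laplace transform of $s^{-\rho}e^{-s^{\nu}}$, i.e. $f_{\nu,\rho}(t)=\frac{1}{2\pi i}\int_{c-i\infty}^{c+i\infty}e^{st}s^{-\rho}e^{-s^{\nu}}\,ds$ for $t>0$, $c>0$, principal branches (the integral converges absolutely for every real $\rho$). *)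

theory Defs
  imports "HOL-Analysis.Analysis"
begin

text \<open>Inverse Laplace transform of s^(-rho) * exp(-s^nu) along the Bromwich line
  Re s = c, with c = 1 (the value is independent of c > 0).  Substituting
  s = c + i y, ds = i dy, the factor 1/(2 pi i) becomes 1/(2 pi).
  Complex powers use the principal branch (Isabelle's complex powr).\<close>
definition bromwich_f :: "real \<Rightarrow> real \<Rightarrow> real \<Rightarrow> complex" where
  "bromwich_f \<nu> \<rho> t =
     complex_of_real (1 / (2 * pi)) *
     integral UNIV (\<lambda>y::real. exp (Complex 1 y * complex_of_real t)
                              * Complex 1 y powr (- complex_of_real \<rho>)
                              * exp (- (Complex 1 y powr complex_of_real \<nu>)))"

end

theory Submission
  imports Defs "HOL-Complex_Analysis.Complex_Analysis" "HOL-Real_Asymp.Real_Asymp"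
begin

text \<open>
  On the line Re s = 1 the integrand e^(st) s^(-\<rho>) e^(-s^\<nu>) is dominated, locally uniformly
  in t, by e^t (1 + |y|)^|\<rho>| exp (- cos (\<nu>\<pi>/2) |y|^\<nu>), so differentiating under the
  integral sign multiplies it by s, i.e. lowers \<rho> by one.

  For \<rho> < 1 and t > 0 the line is folded onto the branch cut.  By conjugate symmetry the line
  integral is twice the real part of its upper half, and Cauchy's theorem, applied to the branch
  of the integrand cut along the negative imaginary axis, moves that half onto the upper edge of
  the negative real axis, where the imaginary part of the integrand at s = -u is
  - u^(-\<rho>) exp (- ut - u^\<nu> cos \<pi>\<nu>) sin (u^\<nu> sin \<pi>\<nu> + \<pi>\<rho>).  The connecting pieces of
  the contour vanish as R tends to infinity: the top segment and the large arc because \<nu> < 1 and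
  t > 0, the arc of radius 1/R because \<rho> < 1.  Finally sin (x + \<pi>(\<mu> - n)) = (-1)^n sin (x + \<pi>\<mu>).
\<close>

section \<open>Integrals depending on a parameter\<close>

lemma absolutely_integrable_on_Ioi:
  fixes f :: "real \<Rightarrow> real"
  assumes cont: "continuous_on {0<..} f" and a: "a > -1"
    and near_0: "\<And>u. 0 < u \<Longrightarrow> u \<le> 1 \<Longrightarrow> \<bar>f u\<bar> \<le> C * u powr a"
    and at_top: "((\<lambda>u. u\<^sup>2 * f u) \<longlongrightarrow> 0) at_top"
  shows "f absolutely_integrable_on {0<..}"
proof -
  have "eventually (\<lambda>u. \<bar>u\<^sup>2 * f u\<bar> < 1) at_top"
    using tendsto_rabs_zero[OF at_top] by (rule order_tendstoD) simp
  then obtain U where U: "\<And>u. u \<ge> U \<Longrightarrow> \<bar>u\<^sup>2 * f u\<bar> < 1"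
    by (auto simp: eventually_at_top_linorder)
  have "continuous_on {1..U} (\<lambda>u. u\<^sup>2 * f u)"
    by (intro continuous_intros continuous_on_subset[OF cont]) auto
  then have "bounded ((\<lambda>u. u\<^sup>2 * f u) ` {1..U})"
    by (intro compact_imp_bounded compact_continuous_image) auto
  then obtain M where "\<forall>y \<in> (\<lambda>u. u\<^sup>2 * f u) ` {1..U}. \<bar>y\<bar> \<le> M"
    unfolding bounded_iff real_norm_def by blast
  then have M: "\<And>u. u \<in> {1..U} \<Longrightarrow> \<bar>u\<^sup>2 * f u\<bar> \<le> M"
    by blast
  have far: "\<bar>f u\<bar> \<le> max 1 M * u powr (-2)" if u: "u \<ge> 1" for u
  proof -
    have "\<bar>u\<^sup>2 * f u\<bar> \<le> max 1 M"
      using U[of u] M[of u] u by (cases "u \<le> U") force+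
    moreover have "\<bar>f u\<bar> = \<bar>u\<^sup>2 * f u\<bar> / u\<^sup>2" and "u powr (-2) = 1 / u\<^sup>2"
      using u by (simp_all add: abs_mult powr_minus_divide)
    ultimately show ?thesis
      using divide_right_mono[of "\<bar>u\<^sup>2 * f u\<bar>" "max 1 M" "u\<^sup>2"] by simp
  qed
  have "f absolutely_integrable_on {1..}"
  proof (rule measurable_bounded_by_integrable_imp_absolutely_integrable)
    show "f \<in> borel_measurable (lebesgue_on {1..})"
      by (rule continuous_imp_measurable_on_sets_lebesgue) (auto intro: continuous_on_subset[OF cont])
    have "(\<lambda>u::real. u powr (-2)) integrable_on {1..}"
      using has_integral_powr_to_inf[of "-2" 1] by (auto simp: integrable_on_def)
    then show "(\<lambda>u. max 1 M * u powr (-2)) integrable_on {1..}"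
      using integrable_cmul[of _ "{1..}" "max 1 M"] by simp
  qed (use far in auto)
  moreover have "f absolutely_integrable_on {0<..1}"
  proof (rule measurable_bounded_by_integrable_imp_absolutely_integrable)
    show "f \<in> borel_measurable (lebesgue_on {0<..1})"
      by (rule continuous_imp_measurable_on_sets_lebesgue) (auto intro: continuous_on_subset[OF cont])
    have "(\<lambda>u. C * u powr a) integrable_on {0..1}"
      using integrable_cmul[OF integrable_on_powr_from_0[of a 1], of C] a by simp
    then show "(\<lambda>u. C * u powr a) integrable_on {0<..1}"
      by (rule integrable_spike_set) (auto intro: negligible_subset[of "{0}"])
  qed (use near_0 in auto)
  ultimately have "f absolutely_integrable_on ({0<..1} \<union> {1..})"
    by (intro absolutely_integrable_Un)
  also have "{0<..1} \<union> {1..} = ({0<..} :: real set)"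
    by auto
  finally show ?thesis .
qed

lemma absolutely_integrable_on_UNIV_if_even:
  fixes f :: "real \<Rightarrow> real"
  assumes even: "\<And>x. f (-x) = f x" and pos: "f absolutely_integrable_on {0<..}"
  shows "f absolutely_integrable_on UNIV"
proof -
  have "(\<lambda>x. f (-x)) absolutely_integrable_on {..<0}"
    using has_absolute_integral_reflect_real[of "{..<0}" "{0<..}" f "integral {0<..} f"] pos
    by (force simp: image_iff)
  then have "f absolutely_integrable_on ({..<0} \<union> {0<..})"
    using pos by (simp add: even absolutely_integrable_Un)
  then show ?thesis
    by (rule absolutely_integrable_spike_set) (auto intro: negligible_subset[of "{0}"])
qed

lemma integral_tendsto_exhaustion:
  fixes f :: "'a::euclidean_space \<Rightarrow> 'b::euclidean_space"
  assumes g: "g integrable_on S" and bound: "\<And>x. x \<in> S \<Longrightarrow> norm (f x) \<le> g x"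
    and sub: "\<And>n. K n \<subseteq> S" and int: "\<And>n. f integrable_on K n"
    and exhaust: "\<And>x. x \<in> S \<Longrightarrow> eventually (\<lambda>n. x \<in> K n) sequentially"
  shows "(\<lambda>n. integral (K n) f) \<longlonglongrightarrow> integral S f"
proof -
  define f\<^sub>K where "f\<^sub>K n x = (if x \<in> K n then f x else 0)" for n x
  have "(\<lambda>n. integral S (f\<^sub>K n)) \<longlonglongrightarrow> integral S f"
  proof (rule dominated_convergence(2))
    show "f\<^sub>K n integrable_on S" for n
      unfolding f\<^sub>K_def integrable_restrict_Int using int[of n] sub[of n] by (simp add: Int_absorb2)
    show "norm (f\<^sub>K n x) \<le> g x" if "x \<in> S" for n x
      using bound[OF that] unfolding f\<^sub>K_def by (auto intro: order_trans[OF norm_ge_zero])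
    show "(\<lambda>n. f\<^sub>K n x) \<longlonglongrightarrow> f x" if "x \<in> S" for x
    proof (rule Lim_transform_eventually[OF tendsto_const])
      show "eventually (\<lambda>n. f x = f\<^sub>K n x) sequentially"
        using exhaust[OF that] by eventually_elim (simp add: f\<^sub>K_def)
    qed
  qed (fact g)
  moreover have "integral S (f\<^sub>K n) = integral (K n) f" for n
    unfolding f\<^sub>K_def integral_restrict_Int using sub[of n] by (simp add: Int_absorb2)
  ultimately show ?thesis
    by simp
qed

lemma integral_tendsto_dominated_at:
  fixes q :: "real \<Rightarrow> 'a::euclidean_space \<Rightarrow> 'b::euclidean_space"
  assumes \<delta>: "\<delta> > 0"
    and int: "\<And>y. y \<in> ball t \<delta> - {t} \<Longrightarrow> q y integrable_on S"
    and g: "g integrable_on S"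
    and bound: "\<And>y s. y \<in> ball t \<delta> - {t} \<Longrightarrow> s \<in> S \<Longrightarrow> norm (q y s) \<le> g s"
    and lim: "\<And>s. s \<in> S \<Longrightarrow> ((\<lambda>y. q y s) \<longlongrightarrow> l s) (at t)"
  shows "((\<lambda>y. integral S (q y)) \<longlongrightarrow> integral S l) (at t)"
proof (subst tendsto_at_iff_sequentially, intro allI impI)
  fix X :: "nat \<Rightarrow> real"
  assume X: "\<forall>i. X i \<in> UNIV - {t}" and X_lim: "X \<longlonglongrightarrow> t"
  obtain N where N: "\<And>n. n \<ge> N \<Longrightarrow> X n \<in> ball t \<delta>"
    using X_lim \<delta> unfolding tendsto_iff by (auto simp: eventually_sequentially dist_commute)
  have X_shift: "X (n + N) \<in> ball t \<delta> - {t}" for n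
    using N[of "n + N"] X by auto
  have "(\<lambda>n. integral S (q (X (n + N)))) \<longlonglongrightarrow> integral S l"
  proof (rule dominated_convergence(2))
    show "q (X (n + N)) integrable_on S" for n
      using int X_shift by blast
    show "norm (q (X (n + N)) s) \<le> g s" if "s \<in> S" for n s
      using bound X_shift that by blast
    have "filterlim (\<lambda>n. X (n + N)) (at t) sequentially"
      unfolding filterlim_at using X_shift LIMSEQ_ignore_initial_segment[OF X_lim] by auto
    then show "(\<lambda>n. q (X (n + N)) s) \<longlonglongrightarrow> l s" if "s \<in> S" for s
      by (rule filterlim_compose[OF lim[OF that]])
  qed (fact g)
  then show "((\<lambda>y. integral S (q y)) \<circ> X) \<longlonglongrightarrow> integral S l"
    unfolding o_def by (rule LIMSEQ_offset)
qed

lemma has_vector_derivative_integral_dominated: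
  fixes f f' :: "real \<Rightarrow> 'a::euclidean_space \<Rightarrow> 'b::euclidean_space"
  assumes \<delta>: "\<delta> > 0"
    and der: "\<And>x s. x \<in> ball t \<delta> \<Longrightarrow> s \<in> S \<Longrightarrow> ((\<lambda>x. f x s) has_vector_derivative f' x s) (at x)"
    and bound: "\<And>x s. x \<in> ball t \<delta> \<Longrightarrow> s \<in> S \<Longrightarrow> norm (f' x s) \<le> g s"
    and g: "g integrable_on S"
    and int: "\<And>x. x \<in> ball t \<delta> \<Longrightarrow> f x integrable_on S"
    and int': "f' t integrable_on S"
  shows "((\<lambda>x. integral S (f x)) has_vector_derivative integral S (f' t)) (at t)"
proof -
  define q where "q y s = (f y s - f t s - (y - t) *\<^sub>R f' t s) /\<^sub>R \<bar>y - t\<bar>" for y s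
  have t: "t \<in> ball t \<delta>"
    using \<delta> by simp
  have q_int: "q y integrable_on S"
    and integral_q: "integral S (q y) =
      (integral S (f y) - integral S (f t) - (y - t) *\<^sub>R integral S (f' t)) /\<^sub>R \<bar>y - t\<bar>"
    if "y \<in> ball t \<delta>" for y
    unfolding q_def using int[OF that] int[OF t] int'
    by (auto intro!: integrable_cmul integrable_diff simp: integral_diff integrable_diff integrable_cmul)
  have q_bound: "norm (q y s) \<le> 2 * g s" if y: "y \<in> ball t \<delta> - {t}" and s: "s \<in> S" for y s
  proof -
    have "norm (f y s - f t s - (y - t) *\<^sub>R f' t s) \<le> norm (y - t) * (2 * g s)"
    proof (rule vector_differentiable_bound_linearization[where S="ball t \<delta>"])
      show "((\<lambda>x. f x s) has_vector_derivative f' x s) (at x within ball t \<delta>)" if "x \<in> ball t \<delta>" for x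
        using der[OF that s] by (rule has_vector_derivative_at_within)
      show "closed_segment t y \<subseteq> ball t \<delta>"
        using y t by (intro closed_segment_subset) auto
      show "norm (f' x s - f' t s) \<le> 2 * g s" if "x \<in> ball t \<delta>" for x
        using bound[OF that s] bound[OF t s] norm_triangle_ineq4[of "f' x s" "f' t s"] by linarith
    qed (fact t)
    moreover have "norm (q y s) = norm (f y s - f t s - (y - t) *\<^sub>R f' t s) / \<bar>y - t\<bar>"
      by (simp add: q_def divide_inverse mult.commute)
    ultimately show ?thesis
      using y by (simp add: divide_le_eq mult.commute)
  qed
  have q_lim: "((\<lambda>y. q y s) \<longlongrightarrow> 0) (at t)" if "s \<in> S" for s
    using der[OF t that] unfolding q_def has_vector_derivative_def has_derivative_at_within by simp
  have "((\<lambda>y. integral S (q y)) \<longlongrightarrow> integral S (\<lambda>s. 0)) (at t)"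
    by (rule integral_tendsto_dominated_at[OF \<delta> _ _ q_bound q_lim])
       (use q_int g in auto)
  moreover have "eventually (\<lambda>y. integral S (q y) =
      (integral S (f y) - integral S (f t) - (y - t) *\<^sub>R integral S (f' t)) /\<^sub>R norm (y - t)) (at t)"
    using eventually_at_ball[OF \<delta>, of t UNIV] by eventually_elim (simp add: integral_q)
  ultimately show ?thesis
    unfolding has_vector_derivative_def has_derivative_at_within
    by (auto intro: Lim_transform_eventually simp: bounded_linear_scaleR_left)
qed

lemma Im_integral:
  "f integrable_on S \<Longrightarrow> Im (integral S f) = integral S (\<lambda>x. Im (f x))"
  using integral_linear[of f S Im] bounded_linear_Im by (simp add: o_def)

section \<open>The Bromwich integrand\<close>

definition bromwich_integrand :: "real \<Rightarrow> real \<Rightarrow> real \<Rightarrow> complex \<Rightarrow> complex" where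
  "bromwich_integrand \<nu> \<rho> t s =
     exp (s * complex_of_real t) * s powr (- complex_of_real \<rho>) * exp (- (s powr complex_of_real \<nu>))"

lemma bromwich_f_eq_line_integral:
  "bromwich_f \<nu> \<rho> t =
     complex_of_real (1 / (2 * pi)) * integral UNIV (\<lambda>y. bromwich_integrand \<nu> \<rho> t (Complex 1 y))"
  by (simp add: bromwich_f_def bromwich_integrand_def)

lemma Re_powr_of_real:
  "s \<noteq> 0 \<Longrightarrow> Re (s powr complex_of_real a) = norm s powr a * cos (a * Arg s)"
  by (simp add: powr_def Re_exp Arg_eq_Im_Ln powr_def[where 'a=real] mult.commute)

lemma norm_bromwich_integrand:
  "s \<noteq> 0 \<Longrightarrow> norm (bromwich_integrand \<nu> \<rho> t s) =
     exp (t * Re s) * norm s powr (-\<rho>) * exp (- (norm s powr \<nu> * cos (\<nu> * Arg s)))"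
  unfolding bromwich_integrand_def norm_mult norm_exp_eq_Re
  by (simp add: norm_powr_complex Re_powr_of_real mult.commute)

lemma norm_bromwich_integrand_le:
  assumes "s \<noteq> 0"
  shows "norm (bromwich_integrand \<nu> \<rho> t s) \<le> exp (t * Re s) * norm s powr (-\<rho>) * exp (norm s powr \<nu>)"
proof -
  have "- (norm s powr \<nu> * cos (\<nu> * Arg s)) \<le> norm s powr \<nu>"
    using mult_left_mono[of "- cos (\<nu> * Arg s)" 1 "norm s powr \<nu>"] by simp
  then show ?thesis
    unfolding norm_bromwich_integrand[OF assms] by (intro mult_left_mono) auto
qed

lemma cos_mult_pi_half_pos: "\<bar>\<nu>\<bar> < 1 \<Longrightarrow> 0 < cos (\<nu> * pi / 2)"
proof (rule cos_gt_zero_pi)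
  assume "\<bar>\<nu>\<bar> < 1"
  then have "\<bar>\<nu> * pi\<bar> < 1 * pi"
    using mult_strict_right_mono[OF _ pi_gt_zero] by (simp add: abs_mult)
  then show "- (pi / 2) < \<nu> * pi / 2" "\<nu> * pi / 2 < pi / 2"
    by (auto simp: abs_less_iff)
qed

lemma cos_mult_pi_half_nonneg: "\<bar>\<nu>\<bar> \<le> 1 \<Longrightarrow> 0 \<le> cos (\<nu> * pi / 2)"
proof (rule cos_ge_zero)
  assume "\<bar>\<nu>\<bar> \<le> 1"
  then have "\<bar>\<nu> * pi\<bar> \<le> 1 * pi"
    using mult_right_mono[OF _ pi_ge_zero] by (simp add: abs_mult)
  then show "- (pi / 2) \<le> \<nu> * pi / 2" "\<nu> * pi / 2 \<le> pi / 2"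
    by (auto simp: abs_le_iff)
qed

lemma cos_mult_Arg_ge:
  assumes "0 \<le> \<nu>" "\<nu> \<le> 2" "s \<noteq> 0" "0 \<le> Re s"
  shows "cos (\<nu> * pi / 2) \<le> cos (\<nu> * Arg s)"
proof -
  have Arg: "\<bar>Arg s\<bar> \<le> pi / 2"
    using Re_Ln_pos_le[OF assms(3)] assms(4) Arg_eq_Im_Ln[OF assms(3)] by simp
  have "cos (\<nu> * pi / 2) \<le> cos (\<nu> * \<bar>Arg s\<bar>)"
  proof (rule cos_monotone_0_pi_le)
    show "\<nu> * \<bar>Arg s\<bar> \<le> \<nu> * pi / 2"
      using mult_left_mono[OF Arg assms(1)] by simp
  qed (use assms in auto)
  also have "cos (\<nu> * \<bar>Arg s\<bar>) = cos (\<nu> * Arg s)"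
    by (simp add: abs_if)
  finally show ?thesis .
qed

lemma norm_bromwich_integrand_right_half_plane:
  assumes "0 \<le> \<nu>" "\<nu> \<le> 2" "0 \<le> Re s" "1 \<le> norm s"
  shows "norm (bromwich_integrand \<nu> \<rho> t s) \<le>
    exp (t * Re s) * norm s powr \<bar>\<rho>\<bar> * exp (- (cos (\<nu> * pi / 2) * norm s powr \<nu>))"
proof -
  have s: "s \<noteq> 0"
    using assms by auto
  have "norm s powr (-\<rho>) \<le> norm s powr \<bar>\<rho>\<bar>"
    using assms by (intro powr_mono) auto
  moreover have "exp (- (norm s powr \<nu> * cos (\<nu> * Arg s))) \<le> exp (- (cos (\<nu> * pi / 2) * norm s powr \<nu>))"
    using mult_left_mono[OF cos_mult_Arg_ge[OF assms(1,2) s assms(3)], of "norm s powr \<nu>"]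
    by (simp add: mult.commute)
  ultimately show ?thesis
    unfolding norm_bromwich_integrand[OF s] by (intro mult_mono mult_left_mono) auto
qed

lemma norm_bromwich_integrand_line:
  assumes "0 \<le> \<nu>" "\<nu> \<le> 1"
  shows "norm (bromwich_integrand \<nu> \<rho> t (Complex 1 y)) \<le>
    exp t * (1 + \<bar>y\<bar>) powr \<bar>\<rho>\<bar> * exp (- (cos (\<nu> * pi / 2) * \<bar>y\<bar> powr \<nu>))"
proof -
  define s where "s = Complex 1 y"
  have norm_s: "1 \<le> norm s" "\<bar>y\<bar> \<le> norm s" "norm s \<le> 1 + \<bar>y\<bar>"
    using abs_Im_le_cmod[of s] cmod_le[of s] by (auto simp: s_def cmod_def)
  have "0 \<le> cos (\<nu> * pi / 2)"
    using assms by (intro cos_mult_pi_half_nonneg) auto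
  then have "exp (- (cos (\<nu> * pi / 2) * norm s powr \<nu>)) \<le> exp (- (cos (\<nu> * pi / 2) * \<bar>y\<bar> powr \<nu>))"
    using powr_mono2[OF assms(1) _ norm_s(2)] by (simp add: mult_left_mono)
  moreover have "norm s powr \<bar>\<rho>\<bar> \<le> (1 + \<bar>y\<bar>) powr \<bar>\<rho>\<bar>"
    using norm_s by (intro powr_mono2) auto
  moreover have "norm (bromwich_integrand \<nu> \<rho> t s) \<le>
      exp t * norm s powr \<bar>\<rho>\<bar> * exp (- (cos (\<nu> * pi / 2) * norm s powr \<nu>))"
    using norm_bromwich_integrand_right_half_plane[of \<nu> s \<rho> t] assms norm_s by (simp add: s_def)
  ultimately show ?thesis
    unfolding s_def by (smt (verit) exp_gt_zero mult_mono mult_nonneg_nonneg powr_ge_zero)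
qed

lemma line_majorant_absolutely_integrable:
  assumes c: "c > 0" and \<nu>: "\<nu> > 0"
  shows "(\<lambda>y::real. (1 + \<bar>y\<bar>) powr a * exp (- (c * \<bar>y\<bar> powr \<nu>))) absolutely_integrable_on UNIV"
proof (rule absolutely_integrable_on_UNIV_if_even)
  show "(\<lambda>y::real. (1 + \<bar>y\<bar>) powr a * exp (- (c * \<bar>y\<bar> powr \<nu>))) absolutely_integrable_on {0<..}"
  proof (rule absolutely_integrable_on_Ioi[where a=0 and C="2 powr \<bar>a\<bar>"])
    show "\<bar>(1 + \<bar>u\<bar>) powr a * exp (- (c * \<bar>u\<bar> powr \<nu>))\<bar> \<le> 2 powr \<bar>a\<bar> * u powr 0"
      if "0 < u" "u \<le> 1" for u
    proof -
      have "(1 + u) powr a \<le> (1 + u) powr \<bar>a\<bar>"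
        using that by (intro powr_mono) auto
      also have "\<dots> \<le> 2 powr \<bar>a\<bar>"
        using that by (intro powr_mono2) auto
      finally have "(1 + u) powr a \<le> 2 powr \<bar>a\<bar>" .
      moreover have "exp (- (c * u powr \<nu>)) \<le> 1"
        using c by simp
      ultimately show ?thesis
        using that mult_mono[of "(1 + u) powr a" "2 powr \<bar>a\<bar>" "exp (- (c * u powr \<nu>))" 1] by simp
    qed
    have "((\<lambda>u. u\<^sup>2 * ((1 + u) powr a * exp (- (c * u powr \<nu>)))) \<longlongrightarrow> 0) at_top"
      using c \<nu> by real_asymp
    then show "((\<lambda>u. u\<^sup>2 * ((1 + \<bar>u\<bar>) powr a * exp (- (c * \<bar>u\<bar> powr \<nu>)))) \<longlongrightarrow> 0) at_top"
      by (rule Lim_transform_eventually) (auto intro: eventually_mono[OF eventually_gt_at_top[of 0]])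
  qed (use \<nu> in \<open>auto intro!: continuous_intros\<close>)
qed simp

lemma continuous_on_bromwich_integrand_line:
  "continuous_on S (\<lambda>y. bromwich_integrand \<nu> \<rho> t (Complex 1 y))"
  unfolding bromwich_integrand_def
  by (intro continuous_intros continuous_on_powr_complex)
     (auto simp: continuous_on_Complex complex_eq_iff intro: continuous_intros)

lemma bromwich_integrand_line_absolutely_integrable:
  assumes "0 < \<nu>" "\<nu> < 1"
  shows "(\<lambda>y. bromwich_integrand \<nu> \<rho> t (Complex 1 y)) absolutely_integrable_on UNIV"
proof (rule measurable_bounded_by_integrable_imp_absolutely_integrable)
  show "(\<lambda>y. bromwich_integrand \<nu> \<rho> t (Complex 1 y)) \<in> borel_measurable (lebesgue_on UNIV)"
    by (rule continuous_imp_measurable_on_sets_lebesgue[OF continuous_on_bromwich_integrand_line]) auto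
  have "0 < cos (\<nu> * pi / 2)"
    using assms by (intro cos_mult_pi_half_pos) auto
  then show "(\<lambda>y. exp t * ((1 + \<bar>y\<bar>) powr \<bar>\<rho>\<bar> * exp (- (cos (\<nu> * pi / 2) * \<bar>y\<bar> powr \<nu>))))
      integrable_on UNIV"
    by (intro integrable_on_mult_right set_lebesgue_integral_eq_integral(1)
        line_majorant_absolutely_integrable assms(1))
  show "norm (bromwich_integrand \<nu> \<rho> t (Complex 1 y)) \<le>
      exp t * ((1 + \<bar>y\<bar>) powr \<bar>\<rho>\<bar> * exp (- (cos (\<nu> * pi / 2) * \<bar>y\<bar> powr \<nu>)))" for y
    using norm_bromwich_integrand_line[of \<nu> \<rho> t y] assms by (simp add: mult.assoc)
qed auto

lemma bromwich_integrand_has_vector_derivative: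
  assumes "s \<noteq> 0"
  shows "((\<lambda>x. bromwich_integrand \<nu> \<rho> x s) has_vector_derivative bromwich_integrand \<nu> (\<rho> - 1) x s) (at x)"
proof -
  define C where "C = s powr (- complex_of_real \<rho>) * exp (- (s powr complex_of_real \<nu>))"
  have "((\<lambda>z. exp (s * z) * C) has_field_derivative s * exp (s * of_real x) * C) (at (of_real x))"
    by (auto intro!: derivative_eq_intros)
  then have "((\<lambda>x. exp (s * of_real x) * C) has_vector_derivative s * exp (s * of_real x) * C) (at x)"
    by (rule has_vector_derivative_real_field)
  moreover have "(\<lambda>x. exp (s * of_real x) * C) = (\<lambda>x. bromwich_integrand \<nu> \<rho> x s)"
    by (simp add: fun_eq_iff bromwich_integrand_def C_def mult.assoc)
  moreover have "s * exp (s * of_real x) * C = bromwich_integrand \<nu> (\<rho> - 1) x s"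
    using assms by (simp add: bromwich_integrand_def C_def powr_def algebra_simps exp_diff exp_minus divide_inverse)
  ultimately show ?thesis
    by (simp only:)
qed

lemma bromwich_f_has_vector_derivative:
  assumes "0 < \<nu>" "\<nu> < 1"
  shows "((\<lambda>x. bromwich_f \<nu> \<rho> x) has_vector_derivative bromwich_f \<nu> (\<rho> - 1) t) (at t)"
proof -
  let ?g = "\<lambda>y. exp (t + 1) * ((1 + \<bar>y\<bar>) powr \<bar>\<rho> - 1\<bar> * exp (- (cos (\<nu> * pi / 2) * \<bar>y\<bar> powr \<nu>)))"
  have "((\<lambda>x. integral UNIV (\<lambda>y. bromwich_integrand \<nu> \<rho> x (Complex 1 y))) has_vector_derivative
      integral UNIV (\<lambda>y. bromwich_integrand \<nu> (\<rho> - 1) t (Complex 1 y))) (at t)"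
  proof (rule has_vector_derivative_integral_dominated[where \<delta>=1 and g="?g"])
    show "((\<lambda>x. bromwich_integrand \<nu> \<rho> x (Complex 1 y)) has_vector_derivative
        bromwich_integrand \<nu> (\<rho> - 1) x (Complex 1 y)) (at x)" for x y
      by (rule bromwich_integrand_has_vector_derivative) (simp add: complex_eq_iff)
    show "norm (bromwich_integrand \<nu> (\<rho> - 1) x (Complex 1 y)) \<le> ?g y" if "x \<in> ball t 1" for x y
    proof -
      have "exp x \<le> exp (t + 1)"
        using that by (auto simp: dist_real_def)
      then show ?thesis
        using norm_bromwich_integrand_line[of \<nu> "\<rho> - 1" x y] assms
        by (smt (verit, best) exp_gt_zero mult_nonneg_nonneg mult_right_mono powr_ge_zero mult.assoc)
    qed
    have "0 < cos (\<nu> * pi / 2)"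
      using assms by (intro cos_mult_pi_half_pos) auto
    then show "?g integrable_on UNIV"
      by (intro integrable_on_mult_right set_lebesgue_integral_eq_integral(1)
          line_majorant_absolutely_integrable assms(1))
  qed (use bromwich_integrand_line_absolutely_integrable[OF assms] in \<open>auto simp: absolutely_integrable_on_def\<close>)
  then show ?thesis
    unfolding bromwich_f_eq_line_integral by (rule has_vector_derivative_mult_right)
qed

section \<open>Cauchy's theorem above the branch cut\<close>

lemma starlike_linear_image:
  assumes "starlike S" "linear f"
  shows "starlike (f ` S)"
proof -
  obtain a where a: "a \<in> S" "\<And>x. x \<in> S \<Longrightarrow> closed_segment a x \<subseteq> S"
    using assms(1) unfolding starlike_def by blast
  have "closed_segment (f a) (f x) \<subseteq> f ` S" if "x \<in> S" for x
    using a(2)[OF that] closed_segment_linear_image[OF assms(2), of a x] by auto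
  then show ?thesis
    unfolding starlike_def using a(1) by blast
qed

lemma open_imag_slit_plane: "open {z. - \<i> * z \<notin> \<real>\<^sub>\<le>\<^sub>0}"
proof -
  have "{z. - \<i> * z \<notin> \<real>\<^sub>\<le>\<^sub>0} = (\<lambda>z. - \<i> * z) -` (- \<real>\<^sub>\<le>\<^sub>0)"
    by auto
  also have "open \<dots>"
    by (intro open_vimage continuous_intros) auto
  finally show ?thesis .
qed

lemma starlike_imag_slit_plane: "starlike {z. - \<i> * z \<notin> \<real>\<^sub>\<le>\<^sub>0}"
proof -
  have "{z. - \<i> * z \<notin> \<real>\<^sub>\<le>\<^sub>0} = (\<lambda>w. \<i> * w) ` (- complex_of_real ` {..0})"
  proof (intro set_eqI iffI)
    fix z assume "z \<in> {z. - \<i> * z \<notin> \<real>\<^sub>\<le>\<^sub>0}"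
    then have "- \<i> * z \<in> - complex_of_real ` {..0}"
      by (auto simp: nonpos_Reals_def)
    then show "z \<in> (\<lambda>w. \<i> * w) ` (- complex_of_real ` {..0})"
      by (rule rev_image_eqI) simp
  qed (auto simp: nonpos_Reals_def)
  moreover have "linear (\<lambda>w. \<i> * w)"
    by (simp add: linear_times)
  ultimately show ?thesis
    using starlike_linear_image starlike_slotted_complex_plane_left by metis
qed

text \<open>The branch of the logarithm cut along the negative imaginary axis; it continues \<open>Ln\<close>
  across the negative real axis from above.\<close>
definition Ln_up :: "complex \<Rightarrow> complex" where
  "Ln_up s = Ln (- \<i> * s) + \<i> * of_real (pi / 2)"

lemma Ln_up_eq_Ln:
  assumes "s \<noteq> 0" "0 \<le> Im s"
  shows "Ln_up s = Ln s"
proof (rule Ln_unique[symmetric])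
  have z: "- \<i> * s \<noteq> 0"
    using assms by simp
  show "exp (Ln_up s) = s"
    unfolding Ln_up_def using z
    by (simp add: exp_add exp_Ln) (simp add: exp_eq_polar cis_conv_exp[symmetric] cis.ctr complex_eq_iff)
  have "\<bar>Im (Ln (- \<i> * s))\<bar> \<le> pi / 2"
    using Re_Ln_pos_le[OF z] assms by simp
  then have "Im (Ln (- \<i> * s)) \<le> pi / 2" "- Im (Ln (- \<i> * s)) \<le> pi / 2"
    by linarith+
  moreover have "Im (Ln_up s) = Im (Ln (- \<i> * s)) + pi / 2"
    by (simp add: Ln_up_def)
  ultimately show "- pi < Im (Ln_up s)" "Im (Ln_up s) \<le> pi"
    using pi_gt_zero by linarith+
qed

definition bromwich_integrand_up :: "real \<Rightarrow> real \<Rightarrow> real \<Rightarrow> complex \<Rightarrow> complex" where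
  "bromwich_integrand_up \<nu> \<rho> t s = exp (s * complex_of_real t) * exp (- complex_of_real \<rho> * Ln_up s)
      * exp (- exp (complex_of_real \<nu> * Ln_up s))"

lemma bromwich_integrand_up_eq:
  assumes "s \<noteq> 0" "0 \<le> Im s"
  shows "bromwich_integrand_up \<nu> \<rho> t s = bromwich_integrand \<nu> \<rho> t s"
  unfolding bromwich_integrand_up_def bromwich_integrand_def Ln_up_eq_Ln[OF assms]
  using assms by (simp add: powr_def mult.commute)

lemma holomorphic_on_bromwich_integrand_up:
  "bromwich_integrand_up \<nu> \<rho> t holomorphic_on {z. - \<i> * z \<notin> \<real>\<^sub>\<le>\<^sub>0}"
  unfolding bromwich_integrand_up_def[abs_def] Ln_up_def by (intro holomorphic_intros) auto

lemma upper_half_plane_subset_imag_slit_plane: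
  "{z. 0 \<le> Im z \<and> z \<noteq> 0} \<subseteq> {z. - \<i> * z \<notin> \<real>\<^sub>\<le>\<^sub>0}"
  by (auto simp: complex_nonpos_Reals_iff complex_eq_iff)

lemma continuous_on_bromwich_integrand_upper_half_plane:
  "continuous_on {z. 0 \<le> Im z \<and> z \<noteq> 0} (bromwich_integrand \<nu> \<rho> t)"
proof (rule continuous_on_eq)
  show "continuous_on {z. 0 \<le> Im z \<and> z \<noteq> 0} (bromwich_integrand_up \<nu> \<rho> t)"
    using holomorphic_on_imp_continuous_on[OF holomorphic_on_bromwich_integrand_up]
      upper_half_plane_subset_imag_slit_plane by (rule continuous_on_subset)
qed (auto intro: bromwich_integrand_up_eq)

definition branch_cut_density :: "real \<Rightarrow> real \<Rightarrow> real \<Rightarrow> real \<Rightarrow> real" where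
  "branch_cut_density \<nu> \<rho> t u =
     u powr (-\<rho>) * exp (- u * t - u powr \<nu> * cos (pi * \<nu>)) * sin (u powr \<nu> * sin (pi * \<nu>) + pi * \<rho>)"

lemma Im_bromwich_integrand_pos_real:
  assumes "x > 0"
  shows "Im (bromwich_integrand \<nu> \<rho> t (of_real x)) = 0"
proof -
  have "bromwich_integrand \<nu> \<rho> t (of_real x) = of_real (exp (x * t) * x powr (-\<rho>) * exp (- (x powr \<nu>)))"
    unfolding bromwich_integrand_def using powr_of_real[of x "-\<rho>"] powr_of_real[of x \<nu>] assms
    by (simp add: exp_of_real[symmetric] del: exp_of_real)
  then show ?thesis
    by simp
qed

lemma Im_bromwich_integrand_neg_real:
  assumes u: "u > 0"
  shows "Im (bromwich_integrand \<nu> \<rho> t (- of_real u)) = - branch_cut_density \<nu> \<rho> t u"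
proof -
  have "(- complex_of_real u) powr (- complex_of_real \<rho>) = of_real (u powr (-\<rho>)) * exp (\<i> * pi * (-\<rho>))"
    using powr_of_neg_real[of "-u" "-\<rho>"] u by simp
  also have "of_real (u powr (-\<rho>)) = exp (of_real (- \<rho> * ln u))"
    using u by (simp add: powr_def flip: exp_of_real)
  finally have \<rho>: "(- complex_of_real u) powr (- complex_of_real \<rho>) =
      exp (of_real (- \<rho> * ln u) + \<i> * of_real (pi * (-\<rho>)))"
    by (simp add: exp_diff exp_minus divide_inverse mult_ac)
  have \<nu>: "(- complex_of_real u) powr (complex_of_real \<nu>) = of_real (u powr \<nu>) * exp (\<i> * of_real (pi * \<nu>))"
    using powr_of_neg_real[of "-u" \<nu>] u by (simp add: mult_ac)
  have "bromwich_integrand \<nu> \<rho> t (- of_real u) = exp (of_real (- u * t) + of_real (- \<rho> * ln u)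
      + \<i> * of_real (pi * (-\<rho>)) - of_real (u powr \<nu>) * exp (\<i> * of_real (pi * \<nu>)))"
    unfolding bromwich_integrand_def \<rho> \<nu> by (simp add: exp_add exp_diff exp_minus field_simps)
  also have "Im \<dots> = exp (- u * t - \<rho> * ln u - u powr \<nu> * cos (pi * \<nu>))
      * sin (- (pi * \<rho>) - u powr \<nu> * sin (pi * \<nu>))"
    by (simp add: Im_exp Re_exp)
  also have "\<dots> = - branch_cut_density \<nu> \<rho> t u"
    unfolding branch_cut_density_def using u
    by (simp add: powr_def exp_diff exp_add exp_minus sin_minus[symmetric] field_simps)
  finally show ?thesis .
qed

lemma bromwich_integrand_cnj:
  assumes "Re s > 0"
  shows "bromwich_integrand \<nu> \<rho> t (cnj s) = cnj (bromwich_integrand \<nu> \<rho> t s)"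
  unfolding bromwich_integrand_def using assms by (simp add: exp_cnj cnj_powr)

lemma integral_bromwich_line_symmetric:
  assumes "R \<ge> 0"
  shows "integral {-R..R} (\<lambda>y. bromwich_integrand \<nu> \<rho> t (Complex 1 y)) =
    of_real (2 * Re (integral {0..R} (\<lambda>y. bromwich_integrand \<nu> \<rho> t (Complex 1 y))))"
proof -
  define F where "F y = bromwich_integrand \<nu> \<rho> t (Complex 1 y)" for y
  have "F integrable_on {a..b}" for a b
    unfolding F_def by (intro integrable_continuous_interval continuous_on_bromwich_integrand_line)
  then have "integral {-R..R} F = integral {-R..0} F + integral {0..R} F"
    using Henstock_Kurzweil_Integration.integral_combine[of "-R" 0 R F] assms by simp
  also have "integral {-R..0} F = integral {0..R} (\<lambda>y. F (-y))"
    using Henstock_Kurzweil_Integration.integral_reflect_real[where a=0 and b=R and f="\<lambda>y. F (-y)"]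
    by simp
  also have "(\<lambda>y. F (-y)) = (\<lambda>y. cnj (F y))"
  proof
    fix y
    have "Complex 1 (-y) = cnj (Complex 1 y)"
      by (simp add: complex_eq_iff)
    then show "F (-y) = cnj (F y)"
      unfolding F_def by (simp add: bromwich_integrand_cnj)
  qed
  also have "integral {0..R} (\<lambda>y. cnj (F y)) + integral {0..R} F = of_real (2 * Re (integral {0..R} F))"
    by (simp add: integral_cnj[symmetric] complex_eq_iff)
  finally show ?thesis
    unfolding F_def .
qed

lemma path_image_part_circlepath_upper_half_plane:
  assumes r: "r > 0" and ab: "a \<in> {0..pi}" "b \<in> {0..pi}"
  shows "path_image (part_circlepath 0 r a b) \<subseteq> {z. 0 \<le> Im z \<and> z \<noteq> 0}"
proof
  fix z assume "z \<in> path_image (part_circlepath 0 r a b)"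
  then obtain \<phi> where \<phi>: "\<phi> \<in> closed_segment a b" "z = of_real r * cis \<phi>"
    unfolding path_image_part_circlepath' by auto
  then have "\<phi> \<in> {0..pi}"
    using ab by (auto simp: closed_segment_eq_real_ivl split: if_splits)
  then have "0 \<le> sin \<phi>"
    by (intro sin_ge_zero) auto
  then show "z \<in> {z. 0 \<le> Im z \<and> z \<noteq> 0}"
    using \<phi> r by simp
qed

lemma bromwich_integrand_contour_integrable:
  assumes "valid_path \<gamma>" "path_image \<gamma> \<subseteq> {z. 0 \<le> Im z \<and> z \<noteq> 0}"
  shows "bromwich_integrand \<nu> \<rho> t contour_integrable_on \<gamma>"
proof (rule contour_integrable_eq)
  show "bromwich_integrand_up \<nu> \<rho> t contour_integrable_on \<gamma>"
    using assms upper_half_plane_subset_imag_slit_plane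
    by (intro contour_integrable_holomorphic_simple[OF holomorphic_on_bromwich_integrand_up
        open_imag_slit_plane]) auto
qed (use assms in \<open>auto intro: bromwich_integrand_up_eq\<close>)

lemma bromwich_integrand_has_contour_integral_0:
  assumes "valid_path \<gamma>" "pathfinish \<gamma> = pathstart \<gamma>" "path_image \<gamma> \<subseteq> {z. 0 \<le> Im z \<and> z \<noteq> 0}"
  shows "(bromwich_integrand \<nu> \<rho> t has_contour_integral 0) \<gamma>"
proof (rule has_contour_integral_eq)
  show "(bromwich_integrand_up \<nu> \<rho> t has_contour_integral 0) \<gamma>"
    using assms upper_half_plane_subset_imag_slit_plane
    by (intro Cauchy_theorem_starlike_simple[OF open_imag_slit_plane starlike_imag_slit_plane
        holomorphic_on_bromwich_integrand_up]) auto
qed (use assms in \<open>auto intro: bromwich_integrand_up_eq\<close>)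

lemma Im_contour_integral_bromwich_positive_axis:
  assumes "0 < a" "a < b"
  shows "Im (contour_integral (linepath (of_real a) (of_real b)) (bromwich_integrand \<nu> \<rho> t)) = 0"
proof -
  let ?G = "bromwich_integrand \<nu> \<rho> t"
  have "path_image (linepath (of_real a) (of_real b)) \<subseteq> {z. 0 \<le> Im z \<and> z \<noteq> 0}"
    using assms by (auto simp: closed_segment_same_Im closed_segment_eq_real_ivl)
  then have "?G contour_integrable_on linepath (of_real a) (of_real b)"
    by (intro bromwich_integrand_contour_integrable) auto
  then have "(\<lambda>x. ?G (of_real x)) integrable_on {a..b}"
    using contour_integrable_linepath_Reals_iff[of "of_real a" "of_real b" ?G] assms by simp
  moreover have "contour_integral (linepath (of_real a) (of_real b)) ?G = integral {a..b} (\<lambda>x. ?G (of_real x))"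
    using contour_integral_linepath_Reals_eq[of "of_real a" "of_real b" ?G] assms by simp
  ultimately have "Im (contour_integral (linepath (of_real a) (of_real b)) ?G) =
      integral {a..b} (\<lambda>x. Im (?G (of_real x)))"
    by (simp add: Im_integral)
  also have "\<dots> = integral {a..b} (\<lambda>x. 0)"
    using assms by (intro integral_cong) (simp add: Im_bromwich_integrand_pos_real)
  finally show ?thesis
    by simp
qed

lemma Im_contour_integral_bromwich_negative_axis:
  assumes "0 < a" "a < b"
  shows "Im (contour_integral (linepath (- of_real b) (- of_real a)) (bromwich_integrand \<nu> \<rho> t)) =
    - integral {a..b} (branch_cut_density \<nu> \<rho> t)"
proof -
  let ?G = "bromwich_integrand \<nu> \<rho> t"
  have "path_image (linepath (- of_real b) (- of_real a)) \<subseteq> {z. 0 \<le> Im z \<and> z \<noteq> 0}"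
    using assms by (auto simp: closed_segment_same_Im closed_segment_eq_real_ivl)
  then have "?G contour_integrable_on linepath (- of_real b) (- of_real a)"
    by (intro bromwich_integrand_contour_integrable) auto
  then have "(\<lambda>x. ?G (of_real x)) integrable_on {-b..-a}"
    using contour_integrable_linepath_Reals_iff[of "- of_real b" "- of_real a" ?G] assms by simp
  then have "(\<lambda>u. ?G (- of_real u)) integrable_on {a..b}"
    using Henstock_Kurzweil_Integration.integrable_reflect_real[where f="\<lambda>u. ?G (- of_real u)"] by simp
  moreover have "contour_integral (linepath (- of_real b) (- of_real a)) ?G = integral {a..b} (\<lambda>u. ?G (- of_real u))"
    using contour_integral_linepath_Reals_eq[of "- of_real b" "- of_real a" ?G] assms
      Henstock_Kurzweil_Integration.integral_reflect_real[where f="\<lambda>u. ?G (- of_real u)" and a=a and b=b]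
    by simp
  ultimately have "Im (contour_integral (linepath (- of_real b) (- of_real a)) ?G) =
      integral {a..b} (\<lambda>u. Im (?G (- of_real u)))"
    by (simp add: Im_integral)
  also have "\<dots> = integral {a..b} (\<lambda>u. - branch_cut_density \<nu> \<rho> t u)"
    using assms by (intro integral_cong) (simp add: Im_bromwich_integrand_neg_real)
  finally show ?thesis
    by simp
qed

lemma bromwich_contour_identity:
  assumes R: "R > 1"
  shows "Re (integral {0..R} (\<lambda>y. bromwich_integrand \<nu> \<rho> t (Complex 1 y)))
           - integral {1/R..R} (branch_cut_density \<nu> \<rho> t) =
         - Im (contour_integral (linepath (Complex 1 R) (Complex 0 R)) (bromwich_integrand \<nu> \<rho> t)
             + contour_integral (part_circlepath 0 R (pi/2) pi) (bromwich_integrand \<nu> \<rho> t)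
             + contour_integral (part_circlepath 0 (1/R) pi 0) (bromwich_integrand \<nu> \<rho> t))"
proof -
  define e where "e = 1 / R"
  have e: "0 < e" "e < 1" "e < R"
    using R by (auto simp: e_def divide_less_eq less_1_mult)
  let ?G = "bromwich_integrand \<nu> \<rho> t" and ?H = "{z. 0 \<le> Im z \<and> z \<noteq> 0}"
  define \<gamma>\<^sub>1 where "\<gamma>\<^sub>1 = linepath 1 (Complex 1 R)"
  define \<gamma>\<^sub>2 where "\<gamma>\<^sub>2 = linepath (Complex 1 R) (Complex 0 R)"
  define \<gamma>\<^sub>3 where "\<gamma>\<^sub>3 = part_circlepath 0 R (pi/2) pi"
  define \<gamma>\<^sub>4 where "\<gamma>\<^sub>4 = linepath (- complex_of_real R) (- complex_of_real e)"
  define \<gamma>\<^sub>5 where "\<gamma>\<^sub>5 = part_circlepath 0 e pi 0"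
  define \<gamma>\<^sub>6 where "\<gamma>\<^sub>6 = linepath (complex_of_real e) 1"
  have arcs: "path_image \<gamma>\<^sub>3 \<subseteq> ?H" "path_image \<gamma>\<^sub>5 \<subseteq> ?H"
    unfolding \<gamma>\<^sub>3_def \<gamma>\<^sub>5_def using R e
    by (intro path_image_part_circlepath_upper_half_plane; simp)+
  have segments: "path_image \<gamma>\<^sub>1 \<subseteq> ?H" "path_image \<gamma>\<^sub>2 \<subseteq> ?H"
    "path_image \<gamma>\<^sub>4 \<subseteq> ?H" "path_image \<gamma>\<^sub>6 \<subseteq> ?H"
    using R e unfolding \<gamma>\<^sub>1_def \<gamma>\<^sub>2_def \<gamma>\<^sub>4_def \<gamma>\<^sub>6_def
    by (auto simp: closed_segment_same_Re closed_segment_same_Im closed_segment_eq_real_ivl)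
  note in_H = arcs segments
  have valid: "valid_path \<gamma>\<^sub>1" "valid_path \<gamma>\<^sub>2" "valid_path \<gamma>\<^sub>3" "valid_path \<gamma>\<^sub>4" "valid_path \<gamma>\<^sub>5" "valid_path \<gamma>\<^sub>6"
    by (simp_all add: \<gamma>\<^sub>1_def \<gamma>\<^sub>2_def \<gamma>\<^sub>3_def \<gamma>\<^sub>4_def \<gamma>\<^sub>5_def \<gamma>\<^sub>6_def)
  have ends: "pathfinish \<gamma>\<^sub>1 = pathstart \<gamma>\<^sub>2" "pathfinish \<gamma>\<^sub>2 = pathstart \<gamma>\<^sub>3" "pathfinish \<gamma>\<^sub>3 = pathstart \<gamma>\<^sub>4"
    "pathfinish \<gamma>\<^sub>4 = pathstart \<gamma>\<^sub>5" "pathfinish \<gamma>\<^sub>5 = pathstart \<gamma>\<^sub>6" "pathfinish \<gamma>\<^sub>6 = pathstart \<gamma>\<^sub>1"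
    by (simp_all add: \<gamma>\<^sub>1_def \<gamma>\<^sub>2_def \<gamma>\<^sub>3_def \<gamma>\<^sub>4_def \<gamma>\<^sub>5_def \<gamma>\<^sub>6_def exp_eq_polar complex_eq_iff)
  have "(?G has_contour_integral 0) (\<gamma>\<^sub>1 +++ \<gamma>\<^sub>2 +++ \<gamma>\<^sub>3 +++ \<gamma>\<^sub>4 +++ \<gamma>\<^sub>5 +++ \<gamma>\<^sub>6)"
    using in_H valid ends by (intro bromwich_integrand_has_contour_integral_0) (auto simp: path_image_join)
  then have "contour_integral \<gamma>\<^sub>1 ?G + contour_integral \<gamma>\<^sub>2 ?G + contour_integral \<gamma>\<^sub>3 ?G
      + contour_integral \<gamma>\<^sub>4 ?G + contour_integral \<gamma>\<^sub>5 ?G + contour_integral \<gamma>\<^sub>6 ?G = 0"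
    using in_H valid ends bromwich_integrand_contour_integrable
    by (auto dest!: contour_integral_unique simp: contour_integral_join valid_path_join add.assoc)
  moreover have "contour_integral \<gamma>\<^sub>1 ?G = \<i> * integral {0..R} (\<lambda>y. ?G (Complex 1 y))"
    unfolding \<gamma>\<^sub>1_def using R by (intro contour_integral_linepath_same_Re) auto
  moreover have "Im (contour_integral \<gamma>\<^sub>6 ?G) = 0"
    unfolding \<gamma>\<^sub>6_def using Im_contour_integral_bromwich_positive_axis[of e 1] e by simp
  moreover have "Im (contour_integral \<gamma>\<^sub>4 ?G) = - integral {e..R} (branch_cut_density \<nu> \<rho> t)"
    unfolding \<gamma>\<^sub>4_def using e by (intro Im_contour_integral_bromwich_negative_axis)
  ultimately show ?thesis
    unfolding e_def[symmetric] \<gamma>\<^sub>2_def[symmetric] \<gamma>\<^sub>3_def[symmetric] \<gamma>\<^sub>5_def[symmetric]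
    by (simp add: complex_eq_iff)
qed

section \<open>The connecting arcs vanish\<close>

lemma norm_contour_integral_part_circlepath_le:
  assumes r: "r > 0" and ab: "a \<le> b"
    and cont: "continuous_on (path_image (part_circlepath z r a b)) f"
    and B: "\<And>\<phi>. \<phi> \<in> {a..b} \<Longrightarrow> norm (f (z + of_real r * cis \<phi>)) \<le> B"
  shows "norm (contour_integral (part_circlepath z r a b) f) \<le> B * r * (b - a)"
    and "norm (contour_integral (part_circlepath z r b a) f) \<le> B * r * (b - a)"
proof -
  have "B \<ge> 0"
    using B[of a] ab by (auto intro: order_trans[OF norm_ge_zero])
  moreover have "(f has_contour_integral contour_integral (part_circlepath z r a b) f) (part_circlepath z r a b)"
    using contour_integrable_continuous_part_circlepath[OF cont] by (rule has_contour_integral_integral)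
  moreover have "norm (f x) \<le> B" if "x \<in> path_image (part_circlepath z r a b)" for x
    using that B ab by (auto simp: path_image_part_circlepath' closed_segment_eq_real_ivl)
  ultimately show *: "norm (contour_integral (part_circlepath z r a b) f) \<le> B * r * (b - a)"
    using has_contour_integral_bound_part_circlepath r ab by blast
  have "contour_integral (part_circlepath z r b a) f = - contour_integral (part_circlepath z r a b) f"
    using contour_integral_reversepath[of "part_circlepath z r a b" f] by simp
  then show "norm (contour_integral (part_circlepath z r b a) f) \<le> B * r * (b - a)"
    using * by simp
qed

lemma norm_bromwich_integrand_top_segment:
  assumes \<nu>: "0 \<le> \<nu>" "\<nu> \<le> 1" and t: "0 \<le> t" and R: "1 \<le> R"
    and z: "z \<in> closed_segment (Complex 1 R) (Complex 0 R)"
  shows "norm (bromwich_integrand \<nu> \<rho> t z) \<le>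
    exp t * (R + 1) powr \<bar>\<rho>\<bar> * exp (- (cos (\<nu> * pi / 2) * R powr \<nu>))"
proof -
  have z_parts: "Im z = R" "0 \<le> Re z" "Re z \<le> 1"
    using z by (auto simp: closed_segment_same_Im closed_segment_eq_real_ivl)
  have norm_z: "R \<le> norm z" "norm z \<le> R + 1"
    using abs_Im_le_cmod[of z] cmod_le[of z] z_parts R by auto
  have "0 \<le> cos (\<nu> * pi / 2)"
    using \<nu> by (intro cos_mult_pi_half_nonneg) auto
  then have "exp (- (cos (\<nu> * pi / 2) * norm z powr \<nu>)) \<le> exp (- (cos (\<nu> * pi / 2) * R powr \<nu>))"
    using powr_mono2[OF \<nu>(1) _ norm_z(1)] R by (simp add: mult_left_mono)
  moreover have "norm z powr \<bar>\<rho>\<bar> \<le> (R + 1) powr \<bar>\<rho>\<bar>"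
    using norm_z R by (intro powr_mono2) auto
  moreover have "exp (t * Re z) \<le> exp t"
    using t z_parts by (simp add: mult_left_le)
  moreover have "norm (bromwich_integrand \<nu> \<rho> t z) \<le>
      exp (t * Re z) * norm z powr \<bar>\<rho>\<bar> * exp (- (cos (\<nu> * pi / 2) * norm z powr \<nu>))"
    using norm_bromwich_integrand_right_half_plane[of \<nu> z \<rho> t] \<nu> z_parts norm_z R by simp
  ultimately show ?thesis
    by (smt (verit) exp_gt_zero mult_mono mult_nonneg_nonneg powr_ge_zero)
qed

lemma top_segment_integral_tendsto_zero:
  assumes \<nu>: "0 < \<nu>" "\<nu> < 1" and t: "0 \<le> t"
  shows "((\<lambda>R. contour_integral (linepath (Complex 1 R) (Complex 0 R)) (bromwich_integrand \<nu> \<rho> t))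
    \<longlongrightarrow> 0) at_top"
proof (rule Lim_null_comparison)
  let ?B = "\<lambda>R. exp t * (R + 1) powr \<bar>\<rho>\<bar> * exp (- (cos (\<nu> * pi / 2) * R powr \<nu>))"
  show "eventually (\<lambda>R. norm (contour_integral (linepath (Complex 1 R) (Complex 0 R))
      (bromwich_integrand \<nu> \<rho> t)) \<le> ?B R) at_top"
    using eventually_ge_at_top[of 1]
  proof eventually_elim
    case (elim R)
    have "closed_segment (Complex 1 R) (Complex 0 R) \<subseteq> {z. 0 \<le> Im z \<and> z \<noteq> 0}"
      using elim by (auto simp: closed_segment_same_Im)
    then have "bromwich_integrand \<nu> \<rho> t contour_integrable_on linepath (Complex 1 R) (Complex 0 R)"
      by (intro contour_integrable_continuous_linepath
          continuous_on_subset[OF continuous_on_bromwich_integrand_upper_half_plane])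
    then have "norm (contour_integral (linepath (Complex 1 R) (Complex 0 R)) (bromwich_integrand \<nu> \<rho> t))
        \<le> ?B R * norm (Complex 0 R - Complex 1 R)"
      using norm_bromwich_integrand_top_segment[of \<nu> t R] \<nu> t elim
      by (intro contour_integral_bound_linepath) auto
    then show ?case
      by (simp add: cmod_def)
  qed
  have "0 < cos (\<nu> * pi / 2)"
    using \<nu> by (intro cos_mult_pi_half_pos) auto
  then show "(?B \<longlongrightarrow> 0) at_top"
    using \<nu> by real_asymp
qed

lemma norm_bromwich_integrand_small_circle:
  assumes t: "0 \<le> t" and r: "0 < r" "r \<le> 1" and \<nu>: "0 \<le> \<nu>"
  shows "norm (bromwich_integrand \<nu> \<rho> t (of_real r * cis \<phi>)) \<le> exp t * r powr (-\<rho>) * exp 1"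
proof -
  define z where "z = of_real r * cis \<phi>"
  have z: "norm z = r" "z \<noteq> 0"
    using r by (auto simp: z_def norm_mult)
  have "t * Re z \<le> t * 1"
    using complex_Re_le_cmod[of z] z r t by (intro mult_left_mono) auto
  moreover have "r powr \<nu> \<le> 1"
    using r \<nu> by (intro powr_le1) auto
  ultimately have "exp (t * Re z) * r powr (-\<rho>) * exp (r powr \<nu>) \<le> exp t * r powr (-\<rho>) * exp 1"
    by (intro mult_mono) auto
  then show ?thesis
    using norm_bromwich_integrand_le[OF z(2), of \<nu> \<rho> t] unfolding z_def z(1)[unfolded z_def] by simp
qed

lemma small_arc_integral_tendsto_zero:
  assumes \<nu>: "0 \<le> \<nu>" and t: "0 \<le> t" and \<rho>: "\<rho> < 1"
  shows "((\<lambda>R. contour_integral (part_circlepath 0 (1/R) pi 0) (bromwich_integrand \<nu> \<rho> t)) \<longlongrightarrow> 0) at_top"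
proof (rule Lim_null_comparison)
  let ?B = "\<lambda>R. exp t * (1/R) powr (-\<rho>) * exp 1 * (1/R) * (pi - 0)"
  show "eventually (\<lambda>R. norm (contour_integral (part_circlepath 0 (1/R) pi 0)
      (bromwich_integrand \<nu> \<rho> t)) \<le> ?B R) at_top"
    using eventually_ge_at_top[of 1]
  proof eventually_elim
    case (elim R)
    have "path_image (part_circlepath 0 (1/R) 0 pi) \<subseteq> {z. 0 \<le> Im z \<and> z \<noteq> 0}"
      using elim by (intro path_image_part_circlepath_upper_half_plane) auto
    then show ?case
      using elim t \<nu> norm_bromwich_integrand_small_circle[of t "1/R" \<nu> \<rho>]
      by (intro norm_contour_integral_part_circlepath_le(2)
          continuous_on_subset[OF continuous_on_bromwich_integrand_upper_half_plane]) auto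
  qed
  show "(?B \<longlongrightarrow> 0) at_top"
    using \<rho> by real_asymp
qed

text \<open>The arc is split at the angle \<pi>/(1 + \<nu>): up to it the factor exp (-s^\<nu>) decays, beyond it
  exp (st) does.  Any angle strictly between \<pi>/2 and min \<pi> (\<pi>/(2\<nu>)) would serve.\<close>
lemma norm_bromwich_integrand_large_arc:
  assumes \<nu>: "0 < \<nu>" "\<nu> < 1" and t: "0 \<le> t" and R: "0 < R" and \<phi>: "\<phi> \<in> {pi/2..pi}"
  shows "norm (bromwich_integrand \<nu> \<rho> t (of_real R * cis \<phi>)) \<le> R powr (-\<rho>) *
    (exp (- (cos (\<nu> * pi / (1 + \<nu>)) * R powr \<nu>)) + exp (R powr \<nu> + t * cos (pi / (1 + \<nu>)) * R))"
proof -
  define \<phi>\<^sub>0 where "\<phi>\<^sub>0 = pi / (1 + \<nu>)"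
  have \<phi>\<^sub>0: "pi / 2 < \<phi>\<^sub>0" "\<phi>\<^sub>0 < pi" "\<nu> * \<phi>\<^sub>0 < pi / 2"
    unfolding \<phi>\<^sub>0_def using \<nu> pi_gt_zero by (auto simp: field_simps)
  define z where "z = of_real R * cis \<phi>"
  have "\<phi> \<in> {-pi<..pi}"
    using \<phi> pi_gt_zero unfolding atLeastAtMost_iff greaterThanAtMost_iff by linarith
  then have "Arg z = \<phi>"
    unfolding z_def using R by (subst Arg_times_of_real) (auto intro!: Arg_cis)
  then have norm_z: "norm (bromwich_integrand \<nu> \<rho> t z) =
      R powr (-\<rho>) * (exp (t * R * cos \<phi>) * exp (- (R powr \<nu> * cos (\<nu> * \<phi>))))"
    using norm_bromwich_integrand[of z \<nu> \<rho> t] R by (simp add: z_def norm_mult mult_ac)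
  have "exp (t * R * cos \<phi>) * exp (- (R powr \<nu> * cos (\<nu> * \<phi>))) \<le>
      exp (- (cos (\<nu> * \<phi>\<^sub>0) * R powr \<nu>)) + exp (R powr \<nu> + t * cos \<phi>\<^sub>0 * R)"
  proof (cases "\<phi> \<le> \<phi>\<^sub>0")
    case True
    have "cos \<phi> \<le> cos (pi / 2)"
      using \<phi> by (intro cos_monotone_0_pi_le) auto
    then have "exp (t * R * cos \<phi>) \<le> 1"
      using t R by (simp add: mult_nonneg_nonpos)
    moreover have "cos (\<nu> * \<phi>\<^sub>0) \<le> cos (\<nu> * \<phi>)"
      using True \<nu> \<phi> \<phi>\<^sub>0 by (intro cos_monotone_0_pi_le) (auto intro: mult_left_mono)
    then have "exp (- (R powr \<nu> * cos (\<nu> * \<phi>))) \<le> exp (- (cos (\<nu> * \<phi>\<^sub>0) * R powr \<nu>))"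
      by (simp add: mult_left_mono mult.commute)
    ultimately show ?thesis
      by (smt (verit) exp_gt_zero mult_left_le_one_le)
  next
    case False
    have "cos \<phi> \<le> cos \<phi>\<^sub>0"
      using False \<phi> \<phi>\<^sub>0 by (intro cos_monotone_0_pi_le) auto
    then have "exp (t * R * cos \<phi>) \<le> exp (t * cos \<phi>\<^sub>0 * R)"
      using t R by (simp add: mult_left_mono mult.commute mult.left_commute)
    moreover have "exp (- (R powr \<nu> * cos (\<nu> * \<phi>))) \<le> exp (R powr \<nu>)"
      using mult_left_mono[of "- cos (\<nu> * \<phi>)" 1 "R powr \<nu>"] by simp
    ultimately show ?thesis
      by (smt (verit) exp_add exp_gt_zero mult_mono)
  qed
  then show ?thesis
    unfolding z_def[symmetric] norm_z \<phi>\<^sub>0_def by (intro mult_left_mono) auto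
qed

lemma large_arc_integral_tendsto_zero:
  assumes \<nu>: "0 < \<nu>" "\<nu> < 1" and t: "0 < t"
  shows "((\<lambda>R. contour_integral (part_circlepath 0 R (pi/2) pi) (bromwich_integrand \<nu> \<rho> t)) \<longlongrightarrow> 0) at_top"
proof (rule Lim_null_comparison)
  define c where "c = cos (\<nu> * pi / (1 + \<nu>))"
  define d where "d = - cos (pi / (1 + \<nu>))"
  let ?B = "\<lambda>R. R powr (-\<rho>) * (exp (- (c * R powr \<nu>)) + exp (R powr \<nu> - t * d * R)) * R * (pi - pi / 2)"
  show "eventually (\<lambda>R. norm (contour_integral (part_circlepath 0 R (pi/2) pi)
      (bromwich_integrand \<nu> \<rho> t)) \<le> ?B R) at_top"
    using eventually_gt_at_top[of 0]
  proof eventually_elim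
    case (elim R)
    have "path_image (part_circlepath 0 R (pi/2) pi) \<subseteq> {z. 0 \<le> Im z \<and> z \<noteq> 0}"
      using elim by (intro path_image_part_circlepath_upper_half_plane) auto
    then show ?case
      using elim t \<nu> norm_bromwich_integrand_large_arc[of \<nu> t R _ \<rho>]
      unfolding c_def d_def
      by (intro norm_contour_integral_part_circlepath_le(1)
          continuous_on_subset[OF continuous_on_bromwich_integrand_upper_half_plane]) auto
  qed
  have "0 < \<nu> * pi / (1 + \<nu>)" "\<nu> * pi / (1 + \<nu>) < pi / 2"
    using \<nu> by (simp_all add: field_simps)
  then have "0 < c"
    unfolding c_def using pi_gt_zero by (intro cos_gt_zero_pi) linarith+
  moreover have "0 < d"
    unfolding d_def using \<nu> cos_monotone_0_pi[of "pi / 2" "pi / (1 + \<nu>)"] by (auto simp: field_simps)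
  ultimately show "(?B \<longlongrightarrow> 0) at_top"
    using \<nu> t by real_asymp
qed

section \<open>The Bromwich integral along the branch cut\<close>

lemma continuous_on_branch_cut_density: "continuous_on {0<..} (branch_cut_density \<nu> \<rho> t)"
  unfolding branch_cut_density_def[abs_def] by (intro continuous_intros) auto

lemma abs_branch_cut_density_le:
  assumes "0 < u"
  shows "\<bar>branch_cut_density \<nu> \<rho> t u\<bar> \<le> u powr (-\<rho>) * exp (u powr \<nu> - u * t)"
proof -
  have "- (u powr \<nu> * cos (pi * \<nu>)) \<le> u powr \<nu>"
    using mult_left_mono[of "- cos (pi * \<nu>)" 1 "u powr \<nu>"] by simp
  then have "exp (- u * t - u powr \<nu> * cos (pi * \<nu>)) \<le> exp (u powr \<nu> - u * t)"
    by simp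
  then have "u powr (-\<rho>) * exp (- u * t - u powr \<nu> * cos (pi * \<nu>)) * \<bar>sin (u powr \<nu> * sin (pi * \<nu>) + pi * \<rho>)\<bar>
      \<le> u powr (-\<rho>) * exp (u powr \<nu> - u * t) * 1"
    by (intro mult_mono mult_left_mono) auto
  then show ?thesis
    by (simp add: branch_cut_density_def abs_mult)
qed

lemma branch_cut_majorant_absolutely_integrable:
  fixes \<nu> \<rho> t :: real
  assumes \<nu>: "0 < \<nu>" "\<nu> < 1" and t: "0 < t" and \<rho>: "\<rho> < 1"
  shows "(\<lambda>u. u powr (-\<rho>) * exp (u powr \<nu> - u * t)) absolutely_integrable_on {0<..}"
proof (rule absolutely_integrable_on_Ioi[where a="-\<rho>" and C="exp 1"])
  show "\<bar>u powr (-\<rho>) * exp (u powr \<nu> - u * t)\<bar> \<le> exp 1 * u powr (-\<rho>)" if "0 < u" "u \<le> 1" for u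
  proof -
    have "u powr \<nu> \<le> 1"
      using that \<nu> by (intro powr_le1) auto
    moreover have "0 \<le> u * t"
      using that t by simp
    ultimately have "exp (u powr \<nu> - u * t) \<le> exp 1"
      by simp
    then show ?thesis
      using mult_left_mono[of "exp (u powr \<nu> - u * t)" "exp 1" "u powr (-\<rho>)"] by (simp add: mult.commute)
  qed
  show "((\<lambda>u. u\<^sup>2 * (u powr (-\<rho>) * exp (u powr \<nu> - u * t))) \<longlongrightarrow> 0) at_top"
    using \<nu> t by real_asymp
qed (use \<rho> in \<open>auto intro!: continuous_intros\<close>)

lemma tendsto_integral_bromwich_line:
  assumes \<nu>: "0 < \<nu>" "\<nu> < 1" and R: "filterlim R at_top sequentially"
  shows "(\<lambda>n. integral {-R n..R n} (\<lambda>y. bromwich_integrand \<nu> \<rho> t (Complex 1 y)))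
    \<longlonglongrightarrow> integral UNIV (\<lambda>y. bromwich_integrand \<nu> \<rho> t (Complex 1 y))"
proof (rule integral_tendsto_exhaustion[where g="\<lambda>y. norm (bromwich_integrand \<nu> \<rho> t (Complex 1 y))"])
  show "(\<lambda>y. norm (bromwich_integrand \<nu> \<rho> t (Complex 1 y))) integrable_on UNIV"
    using bromwich_integrand_line_absolutely_integrable[OF \<nu>] by (simp add: absolutely_integrable_on_def)
  show "(\<lambda>y. bromwich_integrand \<nu> \<rho> t (Complex 1 y)) integrable_on {-R n..R n}" for n
    by (rule integrable_continuous_interval[OF continuous_on_bromwich_integrand_line])
  show "eventually (\<lambda>n. y \<in> {-R n..R n}) sequentially" for y
    using R unfolding filterlim_at_top by (auto elim!: allE[of _ "\<bar>y\<bar>"] eventually_mono)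
qed auto

lemma tendsto_integral_branch_cut_density:
  fixes R :: "nat \<Rightarrow> real"
  assumes \<nu>: "0 < \<nu>" "\<nu> < 1" and t: "0 < t" and \<rho>: "\<rho> < 1"
    and R: "filterlim R at_top sequentially" "\<And>n. 0 < R n"
  shows "(\<lambda>n. integral {1 / R n..R n} (branch_cut_density \<nu> \<rho> t))
    \<longlonglongrightarrow> integral {0<..} (branch_cut_density \<nu> \<rho> t)"
proof (rule integral_tendsto_exhaustion[where g="\<lambda>u. u powr (-\<rho>) * exp (u powr \<nu> - u * t)"])
  show "(\<lambda>u. u powr (-\<rho>) * exp (u powr \<nu> - u * t)) integrable_on {0<..}"
    using branch_cut_majorant_absolutely_integrable[OF \<nu> t \<rho>] by (simp add: absolutely_integrable_on_def)
  show "norm (branch_cut_density \<nu> \<rho> t u) \<le> u powr (-\<rho>) * exp (u powr \<nu> - u * t)" if "u \<in> {0<..}" for u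
    using abs_branch_cut_density_le[of u \<nu> \<rho> t] that by simp
  have "{1 / R n..R n} \<subseteq> {0<..}" for n
    using R(2)[of n] by (auto intro: less_le_trans[of 0 "1 / R n"])
  then show "{1 / R n..R n} \<subseteq> {0<..}" "branch_cut_density \<nu> \<rho> t integrable_on {1 / R n..R n}" for n
    by (auto intro!: integrable_continuous_interval continuous_on_subset[OF continuous_on_branch_cut_density])
  show "eventually (\<lambda>n. u \<in> {1 / R n..R n}) sequentially" if "u \<in> {0<..}" for u
    using R(1) unfolding filterlim_at_top
  proof (elim allE[of _ "max u (1 / u)"] eventually_mono)
    fix n assume "max u (1 / u) \<le> R n"
    then show "u \<in> {1 / R n..R n}"
      using that R(2)[of n] by (simp add: field_simps)
  qed
qed

lemma bromwich_f_eq_branch_cut_integral: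
  assumes \<nu>: "0 < \<nu>" "\<nu> < 1" and t: "0 < t" and \<rho>: "\<rho> < 1"
  shows "bromwich_f \<nu> \<rho> t = complex_of_real (integral {0<..} (branch_cut_density \<nu> \<rho> t) / pi)"
proof -
  let ?G = "bromwich_integrand \<nu> \<rho> t" and ?h = "branch_cut_density \<nu> \<rho> t"
  define F where "F y = ?G (Complex 1 y)" for y
  define R :: "nat \<Rightarrow> real" where "R n = 2 + real n" for n
  have R: "1 < R n" for n
    by (simp add: R_def)
  have R_at_top: "filterlim R at_top sequentially"
    unfolding R_def by (rule filterlim_tendsto_add_at_top[OF tendsto_const filterlim_real_sequentially])
  define E where "E r = contour_integral (linepath (Complex 1 r) (Complex 0 r)) ?G
    + contour_integral (part_circlepath 0 r (pi/2) pi) ?G + contour_integral (part_circlepath 0 (1/r) pi 0) ?G"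
    for r
  have "(E \<longlongrightarrow> 0 + 0 + 0) at_top"
    unfolding E_def using \<nu> t \<rho>
    by (intro tendsto_add top_segment_integral_tendsto_zero large_arc_integral_tendsto_zero
        small_arc_integral_tendsto_zero) auto
  then have "(\<lambda>n. - Im (E (R n))) \<longlonglongrightarrow> 0"
    using filterlim_compose[OF _ R_at_top] tendsto_Im tendsto_minus by fastforce
  moreover have "- Im (E (R n)) = Re (integral {0..R n} F) - integral {1 / R n..R n} ?h" for n
    unfolding E_def F_def using bromwich_contour_identity[OF R[of n]] by simp
  ultimately have "(\<lambda>n. (Re (integral {0..R n} F) - integral {1 / R n..R n} ?h)
      + integral {1 / R n..R n} ?h) \<longlonglongrightarrow> 0 + integral {0<..} ?h"
    using tendsto_integral_branch_cut_density[OF \<nu> t \<rho> R_at_top] R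
    by (intro tendsto_add) (auto intro: less_trans[OF zero_less_one])
  then have "(\<lambda>n. complex_of_real (2 * Re (integral {0..R n} F)))
      \<longlonglongrightarrow> complex_of_real (2 * integral {0<..} ?h)"
    by (intro tendsto_of_real tendsto_mult_left) simp
  moreover have "integral {-R n..R n} F = complex_of_real (2 * Re (integral {0..R n} F))" for n
    unfolding F_def using R[of n] by (intro integral_bromwich_line_symmetric) auto
  ultimately have "(\<lambda>n. integral {-R n..R n} F) \<longlonglongrightarrow> complex_of_real (2 * integral {0<..} ?h)"
    by simp
  with tendsto_integral_bromwich_line[OF \<nu> R_at_top]
  have "integral UNIV F = complex_of_real (2 * integral {0<..} ?h)"
    unfolding F_def by (rule LIMSEQ_unique)
  then show ?thesis
    unfolding bromwich_f_eq_line_integral F_def[symmetric] by (simp add: field_simps)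
qed

lemma sin_add_pi_minus_nat: "sin (x + pi * (\<mu> - real n)) = (-1) ^ n * sin (x + pi * \<mu>)"
proof -
  have "sin (x + pi * (\<mu> - real n)) = sin ((x + pi * \<mu>) - real n * pi)"
    by (simp add: algebra_simps)
  then show ?thesis
    by (simp add: sin_diff)
qed

theorem mainTheorem2:
  fixes \<nu> \<mu> :: real and n :: nat
  assumes "0 < \<nu>" "\<nu> < 1" "0 \<le> \<mu>" "\<mu> < 1"
  shows "(\<forall>k<n. \<forall>t>0. ((\<lambda>x. bromwich_f \<nu> (\<mu> - real k) x)
              has_vector_derivative bromwich_f \<nu> (\<mu> - real (Suc k)) t) (at t))
       \<and> (\<forall>t>0. bromwich_f \<nu> (\<mu> - real n) t =
            complex_of_real ((-1) ^ n / pi *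
              integral {0<..} (\<lambda>u. u powr (real n - \<mu>)
                 * exp (- u * t - u powr \<nu> * cos (pi * \<nu>))
                 * sin (u powr \<nu> * sin (pi * \<nu>) + pi * \<mu>))))"
proof (intro conjI allI impI)
  fix k t
  show "((\<lambda>x. bromwich_f \<nu> (\<mu> - real k) x) has_vector_derivative bromwich_f \<nu> (\<mu> - real (Suc k)) t) (at t)"
    using bromwich_f_has_vector_derivative[OF assms(1,2), of "\<mu> - real k" t] by (simp add: algebra_simps)
next
  fix t :: real
  assume "0 < t"
  then have "bromwich_f \<nu> (\<mu> - real n) t =
      complex_of_real (integral {0<..} (branch_cut_density \<nu> (\<mu> - real n) t) / pi)"
    using assms by (intro bromwich_f_eq_branch_cut_integral) auto
  also have "branch_cut_density \<nu> (\<mu> - real n) t = (\<lambda>u. (-1) ^ n * (u powr (real n - \<mu>)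
      * exp (- u * t - u powr \<nu> * cos (pi * \<nu>)) * sin (u powr \<nu> * sin (pi * \<nu>) + pi * \<mu>)))"
    by (simp add: fun_eq_iff branch_cut_density_def sin_add_pi_minus_nat mult_ac)
  finally show "bromwich_f \<nu> (\<mu> - real n) t =
      complex_of_real ((-1) ^ n / pi * integral {0<..} (\<lambda>u. u powr (real n - \<mu>)
        * exp (- u * t - u powr \<nu> * cos (pi * \<nu>)) * sin (u powr \<nu> * sin (pi * \<nu>) + pi * \<mu>)))"
    by simp
qed

end
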